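(* Let $X$ be a Hausdorff, locally compact, arc connected space with at least two points, let $a\in X$, let $\mathcal I$ be an ideal on $X$, and let $\alpha$ be an infinite cardinal. Then $$\mathfrak P^\alpha_{\mathcal I}(X,a)=\{[f]: f:[0,1]\to X \text{ is an } \alpha\tfrac{\mathcal I}{}\text{loop with base point } a\},$$ i.e. the set of homotopy classes of $\alpha\frac{\mathcal I}{}$loops at $a$ is already a subgroup of $\pi_1(X,a)$.
   Context: A space is arc connected if any two distinct points $p,q$ are joined by a continuous injective map $h:[0,1]\to X$ with $h(0)=p$, $h(1)=q$. An ideal on a set $X$ is a nonempty family $\mathcal I$ of subsets of $X$ closed under finite unions and under taking subsets. For a nonzero cardinal $\alpha$ and an ideal $\mathcal I$ on $X$, a continuous map $f:Z\to X$ is an $\alpha\frac{\mathcal I}{}$map if there is $A\in\mathcal I$ such that for every $x\in X\setminus A$ one has $|f^{-1}(x)|\le\alpha$ when $\alpha$ is finite, and $|f^{-1}(x)|<\alpha$ when $\alpha$ is infinite. An $\alpha\frac{\mathcal I}{}$loop with base point $a$ is an $\alpha\frac{\mathcal I}{}$map $f:[0,1]\to X$ with $f(0)=f(1)=a$. $[f]$ denotes the homotopy class (rel endpoints) of a loop $f$, and $\mathfrak P^\alpha_{\mathcal I}(X,a)$ denotes the subgroup of $\pi_1(X,a)$ generated by the classes of all $\alpha\frac{\mathcal I}{}$loops with base point $a$. *)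

theory Defs
  imports "HOL-Analysis.Analysis" "HOL-Library.Equipollence" "HOL-Algebra.Generated_Groups"
begin

definition arc_connected_space :: "'a topology \<Rightarrow> bool" where
  "arc_connected_space X \<longleftrightarrow>
     (\<forall>p \<in> topspace X. \<forall>q \<in> topspace X. p \<noteq> q \<longrightarrow>
        (\<exists>h. pathin X h \<and> inj_on h {0..1} \<and> h 0 = p \<and> h 1 = q))"

definition ideal_on :: "'a set \<Rightarrow> 'a set set \<Rightarrow> bool" where
  "ideal_on S I \<longleftrightarrow> I \<noteq> {} \<and> (\<forall>A \<in> I. A \<subseteq> S) \<and>
     (\<forall>A \<in> I. \<forall>B \<in> I. A \<union> B \<in> I) \<and> (\<forall>A \<in> I. \<forall>B. B \<subseteq> A \<longrightarrow> B \<in> I)"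

text \<open>An alpha-I-map [0,1] -> X for an infinite cardinal alpha, where alpha is
  represented as the cardinality of a set K: all fibres outside some A in I
  have cardinality strictly less than |K|.\<close>
definition alpha_I_map_inf :: "'k set \<Rightarrow> 'a set set \<Rightarrow> 'a topology \<Rightarrow> (real \<Rightarrow> 'a) \<Rightarrow> bool" where
  "alpha_I_map_inf K I X f \<longleftrightarrow> pathin X f \<and>
     (\<exists>A \<in> I. \<forall>x \<in> topspace X - A. {t \<in> {0..1}. f t = x} \<prec> K)"

definition loop_at :: "'a topology \<Rightarrow> 'a \<Rightarrow> (real \<Rightarrow> 'a) \<Rightarrow> bool" where
  "loop_at X a f \<longleftrightarrow> pathin X f \<and> f 0 = a \<and> f 1 = a"

definition alpha_I_loop_inf :: "'k set \<Rightarrow> 'a set set \<Rightarrow> 'a topology \<Rightarrow> 'a \<Rightarrow> (real \<Rightarrow> 'a) \<Rightarrow> bool" where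
  "alpha_I_loop_inf K I X a f \<longleftrightarrow> alpha_I_map_inf K I X f \<and> f 0 = a \<and> f 1 = a"

definition loop_class :: "'a topology \<Rightarrow> 'a \<Rightarrow> (real \<Rightarrow> 'a) \<Rightarrow> (real \<Rightarrow> 'a) set" where
  "loop_class X a f = {g. loop_at X a g \<and>
     homotopic_with (\<lambda>h. h 0 = a \<and> h 1 = a) (top_of_set {0..1}) X f g}"

text \<open>Path concatenation (same formula as the library's joinpaths, for an arbitrary carrier type).\<close>
definition concat_path :: "(real \<Rightarrow> 'a) \<Rightarrow> (real \<Rightarrow> 'a) \<Rightarrow> real \<Rightarrow> 'a" where
  "concat_path f g = (\<lambda>t. if t \<le> 1/2 then f (2 * t) else g (2 * t - 1))"

definition fundamental_group :: "'a topology \<Rightarrow> 'a \<Rightarrow> (real \<Rightarrow> 'a) set monoid" where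
  "fundamental_group X a =
     \<lparr> carrier = {loop_class X a f | f. loop_at X a f},
       mult = (\<lambda>c d. \<Union>{loop_class X a (concat_path f g) | f g. f \<in> c \<and> g \<in> d}),
       one = loop_class X a (\<lambda>t. a) \<rparr>"

definition P_alpha_I :: "'k set \<Rightarrow> 'a set set \<Rightarrow> 'a topology \<Rightarrow> 'a \<Rightarrow> (real \<Rightarrow> 'a) set set" where
  "P_alpha_I K I X a = generate (fundamental_group X a)
     {loop_class X a f | f. alpha_I_loop_inf K I X a f}"

end

theory Submission
  imports Defs
begin

text \<open>Loops are reparametrized, concatenated and reversed exactly as in the classical proof
  that \<open>\<pi>\<^sub>1(X,a)\<close> is a group, and none of these operations makes a fibre bigger than the
  union of two old fibres. Since \<open>\<alpha>\<close> is infinite, a union of two sets of size \<open>< \<alpha>\<close> again has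
  size \<open>< \<alpha>\<close>, and the exceptional sets combine within the ideal, so the classes of
  \<open>\<alpha>\<^sub>I\<close>-loops are closed under products and inverses. The constant loop may have a fibre
  of size continuum; the identity is instead represented by \<open>h \<cdot> h\<^sup>-\<^sup>1\<close> for an arc \<open>h\<close>
  starting at \<open>a\<close>, whose fibres have at most two points.\<close>

lemma lesspoll_iff_card_of_ordLess: "A \<prec> B \<longleftrightarrow> ordLess2 (card_of A) (card_of B)"
  unfolding lesspoll_def lepoll_def eqpoll_iff_card_of_ordIso
  by (metis card_of_ordLeq ordLeq_iff_ordLess_or_ordIso not_ordLess_ordIso)

lemma Un_lesspoll_infinite: "infinite K \<Longrightarrow> A \<prec> K \<Longrightarrow> B \<prec> K \<Longrightarrow> A \<union> B \<prec> K"
  using card_of_Un_ordLess_infinite lesspoll_iff_card_of_ordLess by blast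

abbreviation loop_homotopic :: "'a topology \<Rightarrow> 'a \<Rightarrow> (real \<Rightarrow> 'a) \<Rightarrow> (real \<Rightarrow> 'a) \<Rightarrow> bool"
  where "loop_homotopic X a f g \<equiv>
    homotopic_with (\<lambda>h. h 0 = a \<and> h 1 = a) (top_of_set {0..1}) X f g"

lemma loop_homotopic_imp_loop_at:
  assumes "loop_homotopic X a f g"
  shows "loop_at X a f \<and> loop_at X a g"
  using homotopic_with_imp_continuous_maps[OF assms] homotopic_with_imp_property[OF assms]
  by (simp add: loop_at_def pathin_def)

lemma loop_homotopic_refl: "loop_at X a f \<Longrightarrow> loop_homotopic X a f f"
  by (simp add: loop_at_def pathin_def)

lemma loop_homotopic_reparametrize:
  assumes f: "pathin X f"
    and \<phi>: "path \<phi>" "\<phi> ` {0..1} \<subseteq> {0..1}" and \<psi>: "path \<psi>" "\<psi> ` {0..1} \<subseteq> {0..1}"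
    and ends: "\<psi> 0 = \<phi> 0" "\<psi> 1 = \<phi> 1" "f (\<phi> 0) = a" "f (\<phi> 1) = a"
  shows "loop_homotopic X a (f \<circ> \<phi>) (f \<circ> \<psi>)"
proof -
  have "homotopic_paths {0..1} \<phi> \<psi>"
  proof (rule homotopic_paths_linear)
    fix t :: real
    assume "t \<in> {0..1}"
    then have "\<phi> t \<in> {0..1}" "\<psi> t \<in> {0..1}"
      using \<phi>(2) \<psi>(2) by (auto simp: image_subset_iff)
    then show "closed_segment (\<phi> t) (\<psi> t) \<subseteq> {0..1}"
      by (simp add: closed_segment_subset)
  qed (use \<phi> \<psi> ends in \<open>auto simp: pathstart_def pathfinish_def\<close>)
  then show ?thesis
    unfolding homotopic_paths_def
    by (rule homotopic_with_compose_continuous_map_left)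
      (use f ends in \<open>auto simp: pathin_def pathstart_def pathfinish_def\<close>)
qed

lemma loop_homotopic_concat_path:
  assumes "loop_homotopic X a f f'" and "loop_homotopic X a g g'"
  shows "loop_homotopic X a (concat_path f g) (concat_path f' g')"
proof -
  let ?S = "prod_topology (top_of_set {0..1::real}) (top_of_set {0..1::real})"
  obtain k1 where k1: "continuous_map ?S X k1" "\<forall>x. k1 (0, x) = f x" "\<forall>x. k1 (1, x) = f' x"
    and ends1: "\<forall>s\<in>{0..1}. k1 (s, 0) = a \<and> k1 (s, 1) = a"
    using assms(1) by (auto simp: homotopic_with_def)
  obtain k2 where k2: "continuous_map ?S X k2" "\<forall>x. k2 (0, x) = g x" "\<forall>x. k2 (1, x) = g' x"
    and ends2: "\<forall>s\<in>{0..1}. k2 (s, 0) = a \<and> k2 (s, 1) = a"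
    using assms(2) by (auto simp: homotopic_with_def)
  define k where "k y = (if snd y \<le> 1/2 then k1 (fst y, 2 * snd y) else k2 (fst y, 2 * snd y - 1))"
    for y
  have fst: "continuous_map ?S euclideanreal fst" and snd: "continuous_map ?S euclideanreal snd"
    using continuous_map_fst continuous_map_snd continuous_map_in_subtopology by blast+
  have "continuous_map ?S X k"
    unfolding k_def
  proof (rule continuous_map_cases_le)
    show "continuous_map (subtopology ?S {y \<in> topspace ?S. snd y \<le> 1/2}) X
            (\<lambda>y. k1 (fst y, 2 * snd y))"
      by (intro fst snd continuous_map_compose[OF _ k1(1), unfolded o_def]
          continuous_intros continuous_map_into_subtopology continuous_map_from_subtopology | simp)+
        (force simp: prod_topology_subtopology)
    show "continuous_map (subtopology ?S {y \<in> topspace ?S. 1/2 \<le> snd y}) X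
            (\<lambda>y. k2 (fst y, 2 * snd y - 1))"
      by (intro fst snd continuous_map_compose[OF _ k2(1), unfolded o_def]
          continuous_intros continuous_map_into_subtopology continuous_map_from_subtopology | simp)+
        (force simp: prod_topology_subtopology)
  qed (use snd ends1 ends2 in \<open>auto simp: mult.commute[of 2]\<close>)
  then show ?thesis
    unfolding homotopic_with_def
    by (intro exI[of _ k]) (simp add: k_def concat_path_def k1 k2 ends1 ends2)
qed

lemma loop_at_concat_path:
  "loop_at X a f \<Longrightarrow> loop_at X a g \<Longrightarrow> loop_at X a (concat_path f g)"
  by (meson loop_homotopic_concat_path loop_homotopic_imp_loop_at loop_homotopic_refl)

lemma loop_homotopic_const_concat_path:
  assumes "loop_at X a f"
  shows "loop_homotopic X a (concat_path (\<lambda>t. a) f) f"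
proof -
  have "loop_homotopic X a (f \<circ> (\<lambda>t. max 0 (2*t - 1))) (f \<circ> (\<lambda>t. t))"
    by (rule loop_homotopic_reparametrize)
      (use assms in \<open>auto simp: loop_at_def path_def continuous_intros\<close>)
  moreover have "f \<circ> (\<lambda>t. max 0 (2*t - 1)) = concat_path (\<lambda>t. a) f"
  proof
    fix t :: real
    show "(f \<circ> (\<lambda>t. max 0 (2*t - 1))) t = concat_path (\<lambda>t. a) f t"
      using assms by (cases "2*t = 1") (auto simp: concat_path_def loop_at_def max_def)
  qed
  ultimately show ?thesis
    by (simp add: o_def)
qed

definition reverse_path :: "(real \<Rightarrow> 'a) \<Rightarrow> real \<Rightarrow> 'a"
  where "reverse_path f = (\<lambda>t. f (1 - t))"

lemma reverse_path_reverse_path [simp]: "reverse_path (reverse_path f) = f"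
  by (simp add: reverse_path_def)

lemma pathin_reverse_path: "pathin X f \<Longrightarrow> pathin X (reverse_path f)"
  unfolding pathin_def reverse_path_def
  by (rule continuous_map_compose[of _ "top_of_set {0..1}", unfolded o_def])
    (auto simp: continuous_on_op_minus)

lemma loop_at_reverse_path: "loop_at X a f \<Longrightarrow> loop_at X a (reverse_path f)"
  by (simp add: loop_at_def pathin_reverse_path) (simp add: reverse_path_def)

lemma concat_reverse_path_eq_tent:
  "concat_path h (reverse_path h) = h \<circ> (\<lambda>t. min (2*t) (2 - 2*t))"
  by (auto simp: concat_path_def reverse_path_def min_def)

lemma loop_homotopic_concat_reverse_path:
  assumes "pathin X f" "f 0 = a"
  shows "loop_homotopic X a (concat_path f (reverse_path f)) (\<lambda>t. a)"
proof -
  have "loop_homotopic X a (f \<circ> (\<lambda>t. min (2*t) (2 - 2*t))) (f \<circ> (\<lambda>t. 0))"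
    by (rule loop_homotopic_reparametrize)
      (use assms in \<open>auto simp: path_def continuous_intros\<close>)
  then show ?thesis
    using assms by (simp add: concat_reverse_path_eq_tent o_def)
qed

lemma loop_homotopic_concat_path_assoc:
  assumes "loop_at X a f" "loop_at X a g" "loop_at X a h"
  shows "loop_homotopic X a (concat_path (concat_path f g) h) (concat_path f (concat_path g h))"
proof -
  let ?k = "concat_path f (concat_path g h)"
  let ?p = "\<lambda>t::real. min (min (2*t) (t + 1/4)) ((t + 1)/2)"
  have k: "pathin X ?k" "?k 0 = a" "?k 1 = a"
    using loop_at_concat_path[OF assms(1) loop_at_concat_path[OF assms(2,3)]]
    by (simp_all add: loop_at_def)
  have "concat_path (concat_path f g) h = ?k \<circ> ?p"
    by (auto simp: fun_eq_iff concat_path_def min_def field_simps)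
      (simp_all add: diff_divide_distrib mult.commute)
  moreover have "path ?p" "path (\<lambda>t::real. t)"
    by (simp_all add: path_def continuous_intros)
  moreover have "?p ` {0..1} \<subseteq> {0..1}"
    by (auto simp: min_le_iff_disj)
  ultimately show ?thesis
    using loop_homotopic_reparametrize[of X ?k ?p "\<lambda>t. t" a] k by (simp add: o_def)
qed

lemma loop_class_eq:
  assumes "loop_homotopic X a f g"
  shows "loop_class X a f = loop_class X a g"
  unfolding loop_class_def
  by (auto intro: homotopic_with_trans[OF homotopic_with_symD[OF assms]] homotopic_with_trans[OF assms])

lemma mem_loop_class_self: "loop_at X a f \<Longrightarrow> f \<in> loop_class X a f"
  by (simp add: loop_class_def loop_at_def pathin_def)

lemma one_fundamental_group: "\<one>\<^bsub>fundamental_group X a\<^esub> = loop_class X a (\<lambda>t. a)"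
  by (simp add: fundamental_group_def)

lemma carrier_fundamental_group:
  "carrier (fundamental_group X a) = {loop_class X a f | f. loop_at X a f}"
  by (simp add: fundamental_group_def)

lemma mult_loop_class:
  assumes "loop_at X a f" "loop_at X a g"
  shows "loop_class X a f \<otimes>\<^bsub>fundamental_group X a\<^esub> loop_class X a g
           = loop_class X a (concat_path f g)"
proof -
  have "loop_class X a (concat_path f' g') = loop_class X a (concat_path f g)"
    if "f' \<in> loop_class X a f" "g' \<in> loop_class X a g" for f' g'
  proof -
    have "loop_homotopic X a f f'" "loop_homotopic X a g g'"
      using that by (simp_all add: loop_class_def)
    then have "loop_homotopic X a (concat_path f g) (concat_path f' g')"
      by (rule loop_homotopic_concat_path)
    then show ?thesis
      by (rule loop_class_eq[symmetric])
  qed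
  moreover have "f \<in> loop_class X a f" "g \<in> loop_class X a g"
    using assms by (simp_all add: mem_loop_class_self)
  ultimately have "{loop_class X a (concat_path f' g') | f' g'.
                      f' \<in> loop_class X a f \<and> g' \<in> loop_class X a g}
                   = {loop_class X a (concat_path f g)}"
    by blast
  then show ?thesis
    by (simp add: fundamental_group_def)
qed

lemma reverse_loop_class_mult:
  assumes "loop_at X a f"
  shows "loop_class X a (reverse_path f) \<otimes>\<^bsub>fundamental_group X a\<^esub> loop_class X a f
           = \<one>\<^bsub>fundamental_group X a\<^esub>"
proof -
  have "pathin X (reverse_path f)" "reverse_path f 0 = a"
    using loop_at_reverse_path[OF assms] by (simp_all add: loop_at_def)
  then have "loop_homotopic X a (concat_path (reverse_path f) (reverse_path (reverse_path f))) (\<lambda>t. a)"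
    by (rule loop_homotopic_concat_reverse_path)
  then have "loop_class X a (concat_path (reverse_path f) f) = loop_class X a (\<lambda>t. a)"
    by (simp add: loop_class_eq)
  then show ?thesis
    using assms loop_at_reverse_path[OF assms] by (simp add: mult_loop_class one_fundamental_group)
qed

lemma group_fundamental_group:
  assumes "a \<in> topspace X"
  shows "group (fundamental_group X a)"
proof (rule groupI)
  let ?G = "fundamental_group X a"
  have const: "loop_at X a (\<lambda>t. a)"
    using assms by (simp add: loop_at_def)
  then show "\<one>\<^bsub>?G\<^esub> \<in> carrier ?G"
    by (auto simp: one_fundamental_group carrier_fundamental_group)
  have carrier_loop: "\<exists>f. loop_at X a f \<and> x = loop_class X a f" if "x \<in> carrier ?G" for x
    using that by (auto simp: carrier_fundamental_group)
  fix x
  assume "x \<in> carrier ?G"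
  then obtain f where f: "loop_at X a f" and x: "x = loop_class X a f"
    using carrier_loop by blast
  have "loop_class X a (concat_path (\<lambda>t. a) f) = loop_class X a f"
    by (rule loop_class_eq[OF loop_homotopic_const_concat_path[OF f]])
  then show "\<one>\<^bsub>?G\<^esub> \<otimes>\<^bsub>?G\<^esub> x = x"
    using f const x by (simp add: mult_loop_class one_fundamental_group)
  have "loop_class X a (reverse_path f) \<in> carrier ?G"
    using loop_at_reverse_path[OF f] by (auto simp: carrier_fundamental_group)
  then show "\<exists>y \<in> carrier ?G. y \<otimes>\<^bsub>?G\<^esub> x = \<one>\<^bsub>?G\<^esub>"
    using reverse_loop_class_mult[OF f] x by blast
  fix y
  assume "y \<in> carrier ?G"
  then obtain g where g: "loop_at X a g" and y: "y = loop_class X a g"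
    using carrier_loop by blast
  show "x \<otimes>\<^bsub>?G\<^esub> y \<in> carrier ?G"
    using f g x y loop_at_concat_path[OF f g] by (auto simp: mult_loop_class carrier_fundamental_group)
  fix z
  assume "z \<in> carrier ?G"
  then obtain h where h: "loop_at X a h" and z: "z = loop_class X a h"
    using carrier_loop by blast
  have "loop_class X a (concat_path (concat_path f g) h) = loop_class X a (concat_path f (concat_path g h))"
    by (rule loop_class_eq[OF loop_homotopic_concat_path_assoc[OF f g h]])
  then show "x \<otimes>\<^bsub>?G\<^esub> y \<otimes>\<^bsub>?G\<^esub> z = x \<otimes>\<^bsub>?G\<^esub> (y \<otimes>\<^bsub>?G\<^esub> z)"
    using f g h x y z by (simp add: mult_loop_class loop_at_concat_path)
qed

lemma inv_loop_class:
  assumes "a \<in> topspace X" "loop_at X a f"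
  shows "inv\<^bsub>fundamental_group X a\<^esub> (loop_class X a f) = loop_class X a (reverse_path f)"
proof (rule group.inv_equality[OF group_fundamental_group[OF assms(1)]])
  show "loop_class X a (reverse_path f) \<otimes>\<^bsub>fundamental_group X a\<^esub> loop_class X a f
          = \<one>\<^bsub>fundamental_group X a\<^esub>"
    using assms(2) by (rule reverse_loop_class_mult)
qed (use assms(2) loop_at_reverse_path[OF assms(2)] in \<open>auto simp: carrier_fundamental_group\<close>)

lemma alpha_I_loop_inf_imp_loop_at: "alpha_I_loop_inf K I X a f \<Longrightarrow> loop_at X a f"
  by (simp add: alpha_I_loop_inf_def alpha_I_map_inf_def loop_at_def)

lemma alpha_I_loop_inf_reverse_path:
  assumes "alpha_I_loop_inf K I X a f"
  shows "alpha_I_loop_inf K I X a (reverse_path f)"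
proof -
  obtain A where A: "A \<in> I" and fibre: "\<And>x. x \<in> topspace X - A \<Longrightarrow> {t \<in> {0..1}. f t = x} \<prec> K"
    using assms by (auto simp: alpha_I_loop_inf_def alpha_I_map_inf_def)
  have reversed_fibre: "{t \<in> {0..1}. reverse_path f t = x} = (\<lambda>t. 1 - t) ` {t \<in> {0..1}. f t = x}"
    for x by (auto simp: reverse_path_def image_iff intro!: exI[of _ "1 - _"])
  have "{t \<in> {0..1}. reverse_path f t = x} \<prec> K" if "x \<in> topspace X - A" for x
    unfolding reversed_fibre by (rule lesspoll_trans1[OF image_lepoll fibre[OF that]])
  with A assms show ?thesis
    by (auto simp: alpha_I_loop_inf_def alpha_I_map_inf_def pathin_reverse_path)
      (auto simp: reverse_path_def)
qed

lemma alpha_I_loop_inf_concat_path: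
  assumes f: "alpha_I_loop_inf K I X a f" and g: "alpha_I_loop_inf K I X a g"
    and K: "infinite K" and I: "ideal_on (topspace X) I"
  shows "alpha_I_loop_inf K I X a (concat_path f g)"
proof -
  obtain A where A: "A \<in> I" and fibre_f: "\<And>x. x \<in> topspace X - A \<Longrightarrow> {t \<in> {0..1}. f t = x} \<prec> K"
    using f by (auto simp: alpha_I_loop_inf_def alpha_I_map_inf_def)
  obtain B where B: "B \<in> I" and fibre_g: "\<And>x. x \<in> topspace X - B \<Longrightarrow> {t \<in> {0..1}. g t = x} \<prec> K"
    using g by (auto simp: alpha_I_loop_inf_def alpha_I_map_inf_def)
  have "A \<union> B \<in> I"
    using I A B by (simp add: ideal_on_def)
  moreover have "loop_at X a (concat_path f g)"
    using f g by (intro loop_at_concat_path alpha_I_loop_inf_imp_loop_at)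
  moreover have "{t \<in> {0..1}. concat_path f g t = x} \<prec> K" if x: "x \<in> topspace X - (A \<union> B)" for x
  proof -
    let ?F = "{t \<in> {0..1}. f t = x}" and ?G = "{t \<in> {0..1}. g t = x}"
    have "{t \<in> {0..1}. concat_path f g t = x} \<subseteq> (\<lambda>t. t/2) ` ?F \<union> (\<lambda>t. (t + 1)/2) ` ?G"
    proof
      fix t
      assume t: "t \<in> {t \<in> {0..1}. concat_path f g t = x}"
      show "t \<in> (\<lambda>t. t/2) ` ?F \<union> (\<lambda>t. (t + 1)/2) ` ?G"
      proof (cases "t \<le> 1/2")
        case True
        with t have "2*t \<in> ?F"
          by (simp add: concat_path_def)
        then show ?thesis
          by (intro UnI1 rev_image_eqI[of "2*t"]) simp_all
      next
        case False
        with t have "2*t - 1 \<in> ?G"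
          by (simp add: concat_path_def)
        then show ?thesis
          by (intro UnI2 rev_image_eqI[of "2*t - 1"]) simp_all
      qed
    qed
    moreover have "(\<lambda>t. t/2) ` ?F \<prec> K" "(\<lambda>t. (t + 1)/2) ` ?G \<prec> K"
      using x lesspoll_trans1[OF image_lepoll fibre_f] lesspoll_trans1[OF image_lepoll fibre_g] by auto
    ultimately show ?thesis
      by (blast intro: lesspoll_trans1[OF subset_imp_lepoll] Un_lesspoll_infinite[OF K])
  qed
  ultimately show ?thesis
    unfolding alpha_I_loop_inf_def alpha_I_map_inf_def loop_at_def by blast
qed

lemma finite_fibre_concat_reverse_path:
  assumes "inj_on h {0..1}"
  shows "finite {t \<in> {0..1::real}. concat_path h (reverse_path h) t = x}"
proof -
  let ?tent = "\<lambda>t::real. min (2*t) (2 - 2*t)"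
  have "{t \<in> {0..1}. h (?tent t) = x} \<subseteq> (\<Union>s \<in> {s \<in> {0..1}. h s = x}. {s/2, 1 - s/2})"
  proof
    fix t
    assume t: "t \<in> {t \<in> {0..1}. h (?tent t) = x}"
    then have "?tent t \<in> {0..1}"
      by (auto simp: min_def)
    moreover have "t \<in> {?tent t / 2, 1 - ?tent t / 2}"
      by (auto simp: min_def field_simps)
    ultimately show "t \<in> (\<Union>s \<in> {s \<in> {0..1}. h s = x}. {s/2, 1 - s/2})"
      using t by blast
  qed
  moreover have "finite {s \<in> {0..1}. h s = x}"
    using finite_vimage_IntI[OF _ assms, of "{x}"] by (simp add: vimage_def Int_def conj_commute)
  ultimately show ?thesis
    by (simp add: concat_reverse_path_eq_tent finite_subset)
qed

lemma exists_alpha_I_loop_homotopic_const: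
  assumes "arc_connected_space X" and "\<exists>p \<in> topspace X. \<exists>q \<in> topspace X. p \<noteq> q"
    and "a \<in> topspace X" and "ideal_on (topspace X) I" and "infinite K"
  shows "\<exists>f. alpha_I_loop_inf K I X a f \<and> loop_homotopic X a f (\<lambda>t. a)"
proof -
  obtain q where "q \<in> topspace X" "q \<noteq> a"
    using assms(2) by metis
  then obtain h where h: "pathin X h" "inj_on h {0..1}" "h 0 = a"
    using assms(1,3) unfolding arc_connected_space_def by metis
  let ?f = "concat_path h (reverse_path h)"
  have null: "loop_homotopic X a ?f (\<lambda>t. a)"
    using h(1,3) by (rule loop_homotopic_concat_reverse_path)
  have "{} \<in> I"
    using assms(4) unfolding ideal_on_def by blast
  moreover have "{t \<in> {0..1}. ?f t = x} \<prec> K" for x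
    using finite_lesspoll_infinite[OF assms(5) finite_fibre_concat_reverse_path[OF h(2)]] .
  ultimately have "alpha_I_loop_inf K I X a ?f"
    using loop_homotopic_imp_loop_at[OF null]
    unfolding alpha_I_loop_inf_def alpha_I_map_inf_def loop_at_def by blast
  with null show ?thesis
    by blast
qed

lemma subgroup_alpha_I_loop_classes:
  assumes "arc_connected_space X" and "\<exists>p \<in> topspace X. \<exists>q \<in> topspace X. p \<noteq> q"
    and a: "a \<in> topspace X" and I: "ideal_on (topspace X) I" and K: "infinite K"
  shows "subgroup {loop_class X a f | f. alpha_I_loop_inf K I X a f} (fundamental_group X a)"
proof (rule group.subgroupI[OF group_fundamental_group[OF a]])
  let ?G = "fundamental_group X a" and ?S = "{loop_class X a f | f. alpha_I_loop_inf K I X a f}"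
  show "?S \<subseteq> carrier ?G"
    by (auto simp: carrier_fundamental_group alpha_I_loop_inf_imp_loop_at)
  show "?S \<noteq> {}"
    using exists_alpha_I_loop_homotopic_const[OF assms] by blast
  show "inv\<^bsub>?G\<^esub> x \<in> ?S" if "x \<in> ?S" for x
    using that a
    by (auto simp: inv_loop_class alpha_I_loop_inf_imp_loop_at intro: alpha_I_loop_inf_reverse_path)
  show "x \<otimes>\<^bsub>?G\<^esub> y \<in> ?S" if "x \<in> ?S" "y \<in> ?S" for x y
    using that
    by (auto simp: mult_loop_class alpha_I_loop_inf_imp_loop_at
        intro: alpha_I_loop_inf_concat_path[OF _ _ K I])
qed

theorem theorem3p3:
  fixes X :: "'a topology" and a :: 'a and I :: "'a set set" and K :: "'k set"
  assumes "Hausdorff_space X" and "locally_compact_space X" and "arc_connected_space X"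
    and "\<exists>p \<in> topspace X. \<exists>q \<in> topspace X. p \<noteq> q"
    and "a \<in> topspace X"
    and "ideal_on (topspace X) I"
    and "infinite K"
  shows "P_alpha_I K I X a = {loop_class X a f | f. alpha_I_loop_inf K I X a f}"
proof -
  let ?S = "{loop_class X a f | f. alpha_I_loop_inf K I X a f}"
  have "subgroup ?S (fundamental_group X a)"
    using assms(3-7) by (rule subgroup_alpha_I_loop_classes)
  then have "generate (fundamental_group X a) ?S \<subseteq> ?S"
    by (rule group.generate_subgroup_incl[OF group_fundamental_group[OF assms(5)] subset_refl])
  moreover have "?S \<subseteq> generate (fundamental_group X a) ?S"
    by (blast intro: generate.incl)
  ultimately show ?thesis
    unfolding P_alpha_I_def by (rule antisym)
qed

end
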